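(* Let $E$ be a countable directed graph satisfying the standing assumptions (1)–(4) of the context, let $S=V_{x_E}$, let $\mathcal S$ be the set of sources of $E_S$, and let $\beta<0$. Then the orbit $[x_E]$ is $\beta$-summable if and only if $$\lim_{n\to\infty}\sum_{\mu\in\mathcal SE^*v_n}e^{\beta(n-|\mu|)}<\infty,$$ where $\mathcal SE^*v_n=\{\mu\in E^*:s(\mu)\in\mathcal S,\ r(\mu)=v_n\}$ (the sequence is eventually nondecreasing, so the limit exists in $[0,\infty]$).
   Context: Directed graph conventions: paths $\mu=\mu_0\cdots\mu_{n-1}$ with $r(\mu_i)=s(\mu_{i+1})$, $|\mu|$ the length, vertices as paths of length $0$, $vE^*w$ paths from $v$ to $w$, $E^\infty$ infinite paths, $vE^1$ edges with source $v$. A source is a vertex receiving no edges. For $S\subseteq E^0$, $E_S$ has vertex set $S$ and edges with source and range in $S$. For $x=x_0x_1\cdots\in E^\infty$: $V_x=\{v\in E^0: vE^*s(x_n)\neq\emptyset\text{ for some }n\}$, $W_x=\{s(x_j):j\ge0\}$. Standing assumptions: (1) there is a fixed $x_E=x_0x_1\cdots\in E^\infty$ with $v_0:=s(x_0)$ a source; write $v_i=s(x_i)$; (2) with $S=V_{x_E}$, $|vE_S^1|<\infty$ for all $v\in S$; (3) $E_S$ has no nontrivial cycles; (4) $V_{x_E}\setminus W_{x_E}$ is finite. The orbit of $x\in E^\infty$ is $[x]=\{y\in E^\infty:\exists n,m\ge0,\ y_{i+m}=x_{i+n}\ \forall i\}$. If $x$ is not eventually periodic, for $y\in[x]$ written $y=\mu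 z$, $x=\nu z$ ($\mu,\nu$ finite, $z\in E^\infty$) set $l_x(y)=e^{-(|\mu|-|\nu|)}$; $[x]$ is $\beta$-summable if $x$ is not eventually periodic and $\sum_{y\in[x]}l_x(y)^\beta<\infty$. *)

theory Defs
  imports "HOL-Analysis.Analysis" "HOL-Library.Countable"
begin

text \<open>A directed graph is given by a vertex type 'v, an edge type 'e and the
source and range maps s r :: 'e => 'v (all vertices / edges of the types are
vertices / edges of the graph). A finite path is a pair (u, es) where u is its
source vertex and es its list of edges; vertices are the paths (u, []) of
length 0.\<close>

definition is_fpath :: "('e \<Rightarrow> 'v) \<Rightarrow> ('e \<Rightarrow> 'v) \<Rightarrow> 'v \<times> 'e list \<Rightarrow> bool" where
  "is_fpath s r \<mu> \<longleftrightarrow>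
     (case \<mu> of (u, es) \<Rightarrow>
        (es \<noteq> [] \<longrightarrow> s (hd es) = u) \<and>
        (\<forall>i. Suc i < length es \<longrightarrow> r (es ! i) = s (es ! Suc i)))"

definition fsrc :: "'v \<times> 'e list \<Rightarrow> 'v" where
  "fsrc \<mu> = fst \<mu>"

definition frng :: "('e \<Rightarrow> 'v) \<Rightarrow> 'v \<times> 'e list \<Rightarrow> 'v" where
  "frng r \<mu> = (if snd \<mu> = [] then fst \<mu> else r (last (snd \<mu>)))"

definition flen :: "'v \<times> 'e list \<Rightarrow> nat" where
  "flen \<mu> = length (snd \<mu>)"

definition paths_between :: "('e \<Rightarrow> 'v) \<Rightarrow> ('e \<Rightarrow> 'v) \<Rightarrow> 'v \<Rightarrow> 'v \<Rightarrow> ('v \<times> 'e list) set" where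
  "paths_between s r v w = {\<mu>. is_fpath s r \<mu> \<and> fsrc \<mu> = v \<and> frng r \<mu> = w}"

definition is_ipath :: "('e \<Rightarrow> 'v) \<Rightarrow> ('e \<Rightarrow> 'v) \<Rightarrow> (nat \<Rightarrow> 'e) \<Rightarrow> bool" where
  "is_ipath s r x \<longleftrightarrow> (\<forall>i. r (x i) = s (x (Suc i)))"

definition is_source :: "('e \<Rightarrow> 'v) \<Rightarrow> 'v \<Rightarrow> bool" where
  "is_source r v \<longleftrightarrow> (\<forall>e. r e \<noteq> v)"

definition Vx :: "('e \<Rightarrow> 'v) \<Rightarrow> ('e \<Rightarrow> 'v) \<Rightarrow> (nat \<Rightarrow> 'e) \<Rightarrow> 'v set" where
  "Vx s r x = {v. \<exists>n. paths_between s r v (s (x n)) \<noteq> {}}"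

definition Wx :: "('e \<Rightarrow> 'v) \<Rightarrow> (nat \<Rightarrow> 'e) \<Rightarrow> 'v set" where
  "Wx s x = {s (x j) | j. True}"

definition sub_edges :: "('e \<Rightarrow> 'v) \<Rightarrow> ('e \<Rightarrow> 'v) \<Rightarrow> 'v set \<Rightarrow> 'e set" where
  "sub_edges s r S = {e. s e \<in> S \<and> r e \<in> S}"

definition no_cycles_in :: "('e \<Rightarrow> 'v) \<Rightarrow> ('e \<Rightarrow> 'v) \<Rightarrow> 'v set \<Rightarrow> bool" where
  "no_cycles_in s r S \<longleftrightarrow>
     (\<forall>\<mu>. is_fpath s r \<mu> \<and> fsrc \<mu> \<in> S \<and> set (snd \<mu>) \<subseteq> sub_edges s r S \<and> flen \<mu> > 0
          \<longrightarrow> frng r \<mu> \<noteq> fsrc \<mu>)"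

definition sources_sub :: "('e \<Rightarrow> 'v) \<Rightarrow> ('e \<Rightarrow> 'v) \<Rightarrow> 'v set \<Rightarrow> 'v set" where
  "sources_sub s r S = {v \<in> S. \<forall>e \<in> sub_edges s r S. r e \<noteq> v}"

definition orbit :: "('e \<Rightarrow> 'v) \<Rightarrow> ('e \<Rightarrow> 'v) \<Rightarrow> (nat \<Rightarrow> 'e) \<Rightarrow> (nat \<Rightarrow> 'e) set" where
  "orbit s r x = {y. is_ipath s r y \<and> (\<exists>n m. \<forall>i. y (i + m) = x (i + n))}"

definition eventually_periodic :: "(nat \<Rightarrow> 'e) \<Rightarrow> bool" where
  "eventually_periodic x \<longleftrightarrow> (\<exists>p N. p > 0 \<and> (\<forall>i\<ge>N. x (i + p) = x i))"

text \<open>l_x(y) = e^{-(|\<mu>|-|\<nu>|)} where y = \<mu> z, x = \<nu> z, i.e. y shifted by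
|\<mu>| equals x shifted by |\<nu>|.\<close>
definition lx :: "(nat \<Rightarrow> 'e) \<Rightarrow> (nat \<Rightarrow> 'e) \<Rightarrow> real" where
  "lx x y = (THE c. \<exists>n m. (\<forall>i. y (i + m) = x (i + n)) \<and> c = exp (- (real m - real n)))"

definition beta_summable :: "('e \<Rightarrow> 'v) \<Rightarrow> ('e \<Rightarrow> 'v) \<Rightarrow> real \<Rightarrow> (nat \<Rightarrow> 'e) \<Rightarrow> bool" where
  "beta_summable s r \<beta> x \<longleftrightarrow>
     \<not> eventually_periodic x \<and> (\<lambda>y. lx x y powr \<beta>) summable_on orbit s r x"

end

theory Submission
  imports Defs
begin

text \<open>Since \<open>E\<^sub>S\<close> is acyclic, the vertices \<open>v\<^sub>n\<close> on \<open>x\<^sub>E\<close> are distinct, so \<open>x\<^sub>E\<close> is not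
  eventually periodic and its orbit is the increasing union over \<open>n\<close> of the sets of paths
  \<open>\<mu> x\<^sub>n x\<^sub>n\<^sub>+\<^sub>1 \<dots>\<close>. These correspond to the finite paths \<open>\<mu>\<close> into \<open>v\<^sub>n\<close>, with weight
  \<open>e\<^bsup>\<beta>(n - |\<mu>|)\<^esup>\<close>, so the orbit sum is the supremum of the sums \<open>g\<^sub>n\<close> of these weights over
  all paths into \<open>v\<^sub>n\<close>. Every vertex of \<open>S\<close> has finitely many ancestors, hence every path into
  \<open>v\<^sub>n\<close> is a suffix of a path from a source of \<open>E\<^sub>S\<close>; summing the geometric series of suffix
  weights gives \<open>f\<^sub>n \<le> g\<^sub>n \<le> f\<^sub>n / (1 - e\<^sup>\<beta>)\<close> for the source sums \<open>f\<^sub>n\<close> of the theorem, and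
  \<open>f\<^sub>n\<close> increases with \<open>n\<close>.\<close>

lemma is_fpath_Nil [simp]: "is_fpath s r (u, [])"
  by (simp add: is_fpath_def)

lemma is_fpath_Cons: "is_fpath s r (u, e # es) \<longleftrightarrow> s e = u \<and> is_fpath s r (r e, es)"
  unfolding is_fpath_def by (cases es) (auto simp: nth_Cons split: nat.splits)

lemma frng_Nil [simp]: "frng r (u, []) = u"
  by (simp add: frng_def)

lemma frng_Cons [simp]: "frng r (u, e # es) = frng r (r e, es)"
  by (simp add: frng_def)

lemma is_fpath_append:
  "is_fpath s r (u, es @ es') \<longleftrightarrow> is_fpath s r (u, es) \<and> is_fpath s r (frng r (u, es), es')"
  by (induction es arbitrary: u) (auto simp: is_fpath_Cons)

lemma frng_append: "frng r (u, es @ es') = frng r (frng r (u, es), es')"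
  by (induction es arbitrary: u) auto

definition reaches :: "('e \<Rightarrow> 'v) \<Rightarrow> ('e \<Rightarrow> 'v) \<Rightarrow> 'v \<Rightarrow> 'v \<Rightarrow> bool" where
  "reaches s r u w \<longleftrightarrow> (\<exists>es. is_fpath s r (u, es) \<and> frng r (u, es) = w)"

definition ancestors :: "('e \<Rightarrow> 'v) \<Rightarrow> ('e \<Rightarrow> 'v) \<Rightarrow> 'v \<Rightarrow> 'v set" where
  "ancestors s r w = {u. reaches s r u w}"

lemma reaches_refl: "reaches s r u u"
  unfolding reaches_def by (rule exI[of _ "[]"]) simp

lemma reaches_trans: "reaches s r u w \<Longrightarrow> reaches s r w z \<Longrightarrow> reaches s r u z"
  unfolding reaches_def by (metis is_fpath_append frng_append)

lemma Vx_iff_reaches: "u \<in> Vx s r x \<longleftrightarrow> (\<exists>n. reaches s r u (s (x n)))"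
  unfolding Vx_def paths_between_def fsrc_def reaches_def by auto

lemma is_ipath_segment:
  assumes "is_ipath s r x"
  shows "is_fpath s r (s (x i), map x [i..<i + k]) \<and> frng r (s (x i), map x [i..<i + k]) = s (x (i + k))"
proof
  show "is_fpath s r (s (x i), map x [i..<i + k])"
    using assms unfolding is_fpath_def by (auto simp: is_ipath_def hd_map nth_append)
  show "frng r (s (x i), map x [i..<i + k]) = s (x (i + k))"
    using assms by (cases k) (simp_all add: frng_def is_ipath_def last_map)
qed

definition fsuffix :: "('e \<Rightarrow> 'v) \<Rightarrow> 'v \<times> 'e list \<Rightarrow> nat \<Rightarrow> 'v \<times> 'e list" where
  "fsuffix r \<mu> k = (frng r (fst \<mu>, take k (snd \<mu>)), drop k (snd \<mu>))"

(* The library fact summable_on_ennreal is shadowed by its enat variant. *)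
lemma ennreal_summable_on [simp]: "(f :: 'a \<Rightarrow> ennreal) summable_on A"
  by (simp add: nonneg_summable_on_complete)

lemma infsum_mono_set_ennreal: "A \<subseteq> B \<Longrightarrow> infsum (f :: 'a \<Rightarrow> ennreal) A \<le> infsum f B"
  by (rule infsum_mono_neutral) auto

lemma sum_le_infsum_ennreal: "finite F \<Longrightarrow> F \<subseteq> A \<Longrightarrow> sum (f :: 'a \<Rightarrow> ennreal) F \<le> infsum f A"
  by (metis infsum_finite infsum_mono_set_ennreal)

lemma infsum_image_le_ennreal:
  fixes g :: "'b \<Rightarrow> ennreal"
  assumes "B \<subseteq> h ` A"
  shows "infsum g B \<le> infsum (g \<circ> h) A"
proof -
  define k where "k = inv_into A h"
  have hk: "h (k b) = b" if "b \<in> B" for b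
    using assms that unfolding k_def by (meson f_inv_into_f subsetD)
  have "inj_on h (k ` B)"
    using hk by (auto intro: inj_onI)
  moreover have "h ` k ` B = B"
    using hk by force
  ultimately have "infsum g B = infsum (g \<circ> h) (k ` B)"
    by (metis infsum_reindex)
  also have "\<dots> \<le> infsum (g \<circ> h) A"
    using assms by (intro infsum_mono_set_ennreal) (auto simp: k_def inv_into_into)
  finally show ?thesis .
qed

lemma infsum_Sigma_le_ennreal:
  fixes g :: "'a \<times> 'b \<Rightarrow> ennreal"
  assumes "\<And>a. a \<in> A \<Longrightarrow> finite (I a)"
    and "\<And>a. a \<in> A \<Longrightarrow> (\<Sum>i\<in>I a. g (a, i)) \<le> C * f a"
  shows "infsum g (Sigma A I) \<le> C * infsum f A"
proof (rule infsum_le_finite_sums)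
  fix G assume G: "finite G" "G \<subseteq> Sigma A I"
  define N where "N = fst ` G"
  have N: "finite N" "N \<subseteq> A"
    using G by (auto simp: N_def)
  have "sum g G \<le> sum g (Sigma N I)"
    using G N assms(1) by (intro sum_mono2) (force simp: N_def)+
  also have "\<dots> = (\<Sum>a\<in>N. \<Sum>i\<in>I a. g (a, i))"
    using N assms(1) by (subst sum.Sigma) auto
  also have "\<dots> \<le> (\<Sum>a\<in>N. C * f a)"
    using N assms(2) by (intro sum_mono) auto
  also have "\<dots> \<le> C * infsum f A"
    using N by (simp add: sum_distrib_left[symmetric] mult_left_mono sum_le_infsum_ennreal)
  finally show "sum g G \<le> C * infsum f A" .
qed simp

lemma finite_subset_UN_incseq:
  assumes "incseq A" "finite F" "F \<subseteq> (\<Union>n. A n)"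
  shows "\<exists>N. F \<subseteq> A N"
  using assms(2,3)
proof (induction F rule: finite_induct)
  case (insert a F)
  then obtain N k where "F \<subseteq> A N" "a \<in> A k"
    by blast
  moreover have "A N \<subseteq> A (max N k)" "A k \<subseteq> A (max N k)"
    using assms(1) by (simp_all add: incseq_def)
  ultimately have "insert a F \<subseteq> A (max N k)"
    by blast
  then show ?case ..
qed simp

lemma infsum_UN_incseq_ennreal:
  fixes f :: "'a \<Rightarrow> ennreal"
  assumes "incseq A"
  shows "infsum f (\<Union>n. A n) = (SUP n. infsum f (A n))"
proof (rule antisym)
  show "infsum f (\<Union>n. A n) \<le> (SUP n. infsum f (A n))"
  proof (rule infsum_le_finite_sums)
    fix F assume F: "finite F" "F \<subseteq> (\<Union>n. A n)"
    then obtain N where "F \<subseteq> A N"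
      using finite_subset_UN_incseq[OF assms] by blast
    then have "sum f F \<le> infsum f (A N)"
      using F by (intro sum_le_infsum_ennreal)
    also have "\<dots> \<le> (SUP n. infsum f (A n))"
      by (rule SUP_upper) simp
    finally show "sum f F \<le> (SUP n. infsum f (A n))" .
  qed simp
  show "(SUP n. infsum f (A n)) \<le> infsum f (\<Union>n. A n)"
    by (intro SUP_least infsum_mono_set_ennreal) auto
qed

lemma nonneg_summable_on_iff_infsum_ennreal:
  fixes f :: "'a \<Rightarrow> real"
  assumes nonneg: "\<And>a. a \<in> A \<Longrightarrow> 0 \<le> f a"
  shows "f summable_on A \<longleftrightarrow> infsum (\<lambda>a. ennreal (f a)) A < \<infinity>"
proof
  assume "f summable_on A"
  then have "ennreal (infsum f A) = (SUP F\<in>{F. finite F \<and> F \<subseteq> A}. ennreal (sum f F))"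
    using nonneg by (rule infsum_nonneg_is_SUPREMUM_ennreal)
  also have "\<dots> = infsum (\<lambda>a. ennreal (f a)) A"
    using nonneg by (subst nonneg_infsum_complete) (auto intro!: SUP_cong simp: subset_iff)
  finally show "infsum (\<lambda>a. ennreal (f a)) A < \<infinity>"
    by (metis ennreal_less_top infinity_ennreal_def)
next
  assume fin: "infsum (\<lambda>a. ennreal (f a)) A < \<infinity>"
  show "f summable_on A"
  proof (rule nonneg_bdd_above_summable_on)
    show "bdd_above (sum f ` {F. F \<subseteq> A \<and> finite F})"
    proof (rule bdd_aboveI)
      fix t assume "t \<in> sum f ` {F. F \<subseteq> A \<and> finite F}"
      then obtain F where F: "F \<subseteq> A" "finite F" "t = sum f F"
        by blast
      have "ennreal t = (\<Sum>a\<in>F. ennreal (f a))"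
        using F nonneg by (auto intro!: sum_ennreal[symmetric])
      also have "\<dots> \<le> infsum (\<lambda>a. ennreal (f a)) A"
        using F by (intro sum_le_infsum_ennreal)
      finally show "t \<le> enn2real (infsum (\<lambda>a. ennreal (f a)) A)"
        using fin F nonneg by (metis enn2real_ennreal enn2real_mono infinity_ennreal_def sum_nonneg subsetD)
    qed
  qed (use nonneg in auto)
qed

lemma eventually_periodic_if_two_shifts:
  assumes h1: "\<forall>i. y (i + m) = x (i + n)" and h2: "\<forall>i. y (i + m') = x (i + n')"
    and lt: "int n - int m > int n' - int m'"
  shows "eventually_periodic x"
proof -
  define p where "p = nat ((int n - int m) - (int n' - int m'))"
  have "\<forall>i\<ge>m + n'. x (i + p) = x i"
  proof (intro allI impI)
    fix i assume i: "i \<ge> m + n'"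
    define j where "j = i + m' - n'"
    have "(j - m') + m' = j" "(j - m') + n' = i" "(j - m) + m = j" "(j - m) + n = i + p"
      using i lt by (simp_all add: j_def p_def)
    then have "y j = x i" "y j = x (i + p)"
      using h1[rule_format, of "j - m"] h2[rule_format, of "j - m'"] by metis+
    then show "x (i + p) = x i"
      by simp
  qed
  moreover have "p > 0"
    using lt by (simp add: p_def)
  ultimately show ?thesis
    unfolding eventually_periodic_def by blast
qed

lemma shift_offsets_eq:
  assumes "\<not> eventually_periodic x"
    and "\<forall>i. y (i + m) = x (i + n)" and "\<forall>i. y (i + m') = x (i + n')"
  shows "m + n' = m' + n"
proof -
  have "\<not> int n - int m > int n' - int m'" "\<not> int n' - int m' > int n - int m"
    using eventually_periodic_if_two_shifts assms by metis+
  then show ?thesis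
    by linarith
qed

lemma lx_powr_eq:
  assumes "\<not> eventually_periodic x" and "\<forall>i. y (i + m) = x (i + n)"
  shows "lx x y powr \<beta> = exp (\<beta> * (real n - real m))"
proof -
  have "lx x y = exp (- (real m - real n))"
    unfolding lx_def
  proof (rule the_equality)
    fix c assume "\<exists>n' m'. (\<forall>i. y (i + m') = x (i + n')) \<and> c = exp (- (real m' - real n'))"
    then obtain n' m' where "\<forall>i. y (i + m') = x (i + n')" and c: "c = exp (- (real m' - real n'))"
      by blast
    then have "m + n' = m' + n"
      using shift_offsets_eq assms by blast
    then show "c = exp (- (real m - real n))"
      proof -
      have "real m - real n = real m' - real n'"
        using \<open>m + n' = m' + n\<close> by (simp add: algebra_simps flip: of_nat_add)
      then show ?thesis
        by (simp add: c)
    qed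
  qed (use assms(2) in blast)
  then show ?thesis
    by (simp add: powr_def algebra_simps)
qed

lemma sum_exp_suffix_lengths_le:
  fixes \<beta> a :: real
  assumes "\<beta> < 0"
  shows "(\<Sum>k\<le>L. exp (\<beta> * (a - real (L - k)))) \<le> exp (\<beta> * (a - real L)) / (1 - exp \<beta>)"
proof -
  have q: "exp \<beta> < 1"
    using assms by simp
  have "(\<Sum>k\<le>L. exp (\<beta> * (a - real (L - k)))) = exp (\<beta> * (a - real L)) * (\<Sum>k<Suc L. exp \<beta> ^ k)"
    unfolding sum_distrib_left lessThan_Suc_atMost
  proof (rule sum.cong)
    fix k assume "k \<in> {..L}"
    then have "\<beta> * (a - real (L - k)) = \<beta> * (a - real L) + real k * \<beta>"
      by (simp add: algebra_simps)
    then show "exp (\<beta> * (a - real (L - k))) = exp (\<beta> * (a - real L)) * exp \<beta> ^ k"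
      by (simp add: exp_add exp_of_nat_mult)
  qed simp
  also have "(\<Sum>k<Suc L. exp \<beta> ^ k) = (1 - exp \<beta> ^ Suc L) / (1 - exp \<beta>)"
    using q by (simp only: sum_gp_strict) simp
  also have "\<dots> \<le> 1 / (1 - exp \<beta>)"
    using q by (intro divide_right_mono) auto
  finally show ?thesis
    by (simp add: mult_left_mono)
qed

lemma incseq_comparable_limit_finite_iff:
  fixes f g :: "nat \<Rightarrow> ennreal"
  assumes "incseq f" and "\<And>n. f n \<le> g n" and "\<And>n. g n \<le> C * f n" and "C < \<infinity>"
  shows "(SUP n. g n) < \<infinity> \<longleftrightarrow> (\<exists>L. f \<longlonglongrightarrow> L \<and> L < \<infinity>)"
proof -
  have lim: "f \<longlonglongrightarrow> (SUP n. f n)"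
    using assms(1) by (rule LIMSEQ_SUP)
  have "(SUP n. f n) \<le> (SUP n. g n)"
    using assms(2) by (intro SUP_mono) auto
  moreover have "(SUP n. g n) \<le> C * (SUP n. f n)"
    using assms(3) by (intro SUP_least) (meson SUP_upper UNIV_I mult_left_mono order_trans zero_le)
  moreover have "C * (SUP n. f n) < \<infinity>" if "(SUP n. f n) < \<infinity>"
    using that assms(4) by (simp add: ennreal_mult_less_top)
  ultimately have "(SUP n. g n) < \<infinity> \<longleftrightarrow> (SUP n. f n) < \<infinity>"
    by (meson le_less_trans)
  also have "\<dots> \<longleftrightarrow> (\<exists>L. f \<longlonglongrightarrow> L \<and> L < \<infinity>)"
    using lim LIMSEQ_unique by blast
  finally show ?thesis .
qed

definition path_weight :: "real \<Rightarrow> nat \<Rightarrow> 'v \<times> 'e list \<Rightarrow> ennreal" where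
  "path_weight \<beta> n \<mu> = ennreal (exp (\<beta> * (real n - real (flen \<mu>))))"

locale acyclic_ancestry =
  fixes s r :: "'e \<Rightarrow> 'v" and x :: "nat \<Rightarrow> 'e"
  assumes ipath: "is_ipath s r x"
    and acyclic: "no_cycles_in s r (Vx s r x)"
    and finite_off_ray: "finite (Vx s r x - Wx s x)"
begin

abbreviation S :: "'v set" where
  "S \<equiv> Vx s r x"

definition v :: "nat \<Rightarrow> 'v" where
  "v n = s (x n)"

lemma v_in_S: "v n \<in> S"
  unfolding v_def using Vx_iff_reaches reaches_refl by metis

lemma reaches_in_S: "reaches s r u w \<Longrightarrow> w \<in> S \<Longrightarrow> u \<in> S"
  using Vx_iff_reaches reaches_trans by metis

lemma path_edges_in_S: "is_fpath s r (u, es) \<Longrightarrow> frng r (u, es) \<in> S \<Longrightarrow> set es \<subseteq> sub_edges s r S"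
proof (induction es arbitrary: u)
  case (Cons e es)
  have se: "s e = u" and p: "is_fpath s r (r e, es)" and rng: "frng r (r e, es) \<in> S"
    using Cons.prems by (auto simp: is_fpath_Cons)
  have "r e \<in> S" "u \<in> S"
    using reaches_in_S Cons.prems p rng unfolding reaches_def by blast+
  then show ?case
    using Cons.IH[OF p rng] se by (auto simp: sub_edges_def)
qed simp

lemma returning_path_Nil:
  assumes "is_fpath s r (u, es)" and "reaches s r (frng r (u, es)) u" and "u \<in> S"
  shows "es = []"
proof -
  obtain es' where es': "is_fpath s r (frng r (u, es), es')" "frng r (frng r (u, es), es') = u"
    using assms(2) unfolding reaches_def by blast
  have cycle: "is_fpath s r (u, es @ es')" "frng r (u, es @ es') = u"
    using assms(1) es' by (simp_all add: is_fpath_append frng_append)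
  moreover have "set (es @ es') \<subseteq> sub_edges s r S"
    using path_edges_in_S cycle assms(3) by metis
  ultimately have "\<not> flen (u, es @ es') > 0"
    using acyclic assms(3) unfolding no_cycles_in_def fsrc_def by (metis fst_conv snd_conv)
  then show ?thesis
    by (simp add: flen_def)
qed

lemma v_less_neq: "i < j \<Longrightarrow> v i \<noteq> v j"
proof
  assume "i < j" "v i = v j"
  then have "is_fpath s r (v i, map x [i..<j])" "frng r (v i, map x [i..<j]) = v i"
    using is_ipath_segment[OF ipath, of i "j - i"] by (simp_all add: v_def)
  then have "map x [i..<j] = []"
    using returning_path_Nil reaches_refl v_in_S by metis
  then show False
    using \<open>i < j\<close> by simp
qed

lemma inj_v: "inj v"
proof (rule injI)
  fix i j assume "v i = v j"
  then show "i = j"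
    using v_less_neq by (metis linorder_neqE_nat)
qed

lemma not_eventually_periodic: "\<not> eventually_periodic x"
proof
  assume "eventually_periodic x"
  then obtain p N where "p > 0" "\<forall>i\<ge>N. x (i + p) = x i"
    unfolding eventually_periodic_def by blast
  then have "v (N + p) = v N"
    by (simp add: v_def)
  then have "N + p = N"
    using inj_v by (simp add: inj_eq)
  then show False
    using \<open>p > 0\<close> by simp
qed

lemma finite_ancestors:
  assumes "w \<in> S"
  shows "finite (ancestors s r w)"
proof -
  obtain N where wN: "reaches s r w (v N)"
    using assms Vx_iff_reaches unfolding v_def by metis
  have "ancestors s r w \<subseteq> (S - Wx s x) \<union> v ` {..N}"
  proof
    fix u assume "u \<in> ancestors s r w"
    then have uN: "reaches s r u (v N)"
      using wN reaches_trans by (auto simp: ancestors_def)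
    show "u \<in> (S - Wx s x) \<union> v ` {..N}"
    proof (cases "u \<in> Wx s x")
      case True
      then obtain j where uj: "u = v j"
        by (auto simp: Wx_def v_def)
      have "j \<le> N"
      proof (rule ccontr)
        assume "\<not> j \<le> N"
        then have "is_fpath s r (v N, map x [N..<j])" "frng r (v N, map x [N..<j]) = u"
          using is_ipath_segment[OF ipath, of N "j - N"] uj by (simp_all add: v_def)
        then have "map x [N..<j] = []"
          using returning_path_Nil uN v_in_S by metis
        then show False
          using \<open>\<not> j \<le> N\<close> by simp
      qed
      then show ?thesis
        using uj by auto
    qed (use uN reaches_in_S v_in_S in blast)
  qed
  then show ?thesis
    using finite_off_ray by (simp add: finite_subset)
qed

text \<open>Walk backwards inside \<open>S\<close>: the ancestor sets shrink strictly by acyclicity and are finite,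
  so the walk stops at a source.\<close>
lemma source_path_exists:
  "w \<in> S \<Longrightarrow> \<exists>u es. u \<in> sources_sub s r S \<and> is_fpath s r (u, es) \<and> frng r (u, es) = w"
proof (induction w rule: measure_induct_rule[where f = "\<lambda>w. card (ancestors s r w)"])
  case (less w)
  show ?case
  proof (cases "w \<in> sources_sub s r S")
    case True
    then show ?thesis
      by (intro exI[of _ w] exI[of _ "[]"]) simp
  next
    case False
    then obtain e where e: "e \<in> sub_edges s r S" "r e = w"
      using less.prems by (auto simp: sources_sub_def)
    have uS: "s e \<in> S"
      using e by (simp add: sub_edges_def)
    have pe: "is_fpath s r (s e, [e])" "frng r (s e, [e]) = w"
      using e by (auto simp: is_fpath_Cons)
    then have "reaches s r (s e) w"
      unfolding reaches_def by blast
    then have "ancestors s r (s e) \<subseteq> ancestors s r w"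
      using reaches_trans by (auto simp: ancestors_def)
    moreover have "w \<notin> ancestors s r (s e)"
      using returning_path_Nil[OF pe(1)] pe(2) uS by (auto simp: ancestors_def)
    moreover have "w \<in> ancestors s r w"
      by (simp add: ancestors_def reaches_refl)
    ultimately have "ancestors s r (s e) \<subset> ancestors s r w"
      by blast
    then have "card (ancestors s r (s e)) < card (ancestors s r w)"
      using finite_ancestors[OF less.prems] by (rule psubset_card_mono[rotated])
    then obtain u0 es where u0: "u0 \<in> sources_sub s r S" "is_fpath s r (u0, es)" "frng r (u0, es) = s e"
      using less.IH uS by blast
    then have "is_fpath s r (u0, es @ [e])" "frng r (u0, es @ [e]) = w"
      using pe by (auto simp: is_fpath_append frng_append)
    then show ?thesis
      using u0(1) by blast
  qed
qed

definition paths_into :: "nat \<Rightarrow> ('v \<times> 'e list) set" where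
  "paths_into n = {\<mu>. is_fpath s r \<mu> \<and> frng r \<mu> = v n}"

definition source_paths_into :: "nat \<Rightarrow> ('v \<times> 'e list) set" where
  "source_paths_into n = {\<mu>. is_fpath s r \<mu> \<and> fsrc \<mu> \<in> sources_sub s r S \<and> frng r \<mu> = v n}"

lemma paths_into_suffixes:
  "paths_into n \<subseteq> (\<lambda>(\<nu>, k). fsuffix r \<nu> k) ` Sigma (source_paths_into n) (\<lambda>\<nu>. {..flen \<nu>})"
proof
  fix \<mu> assume "\<mu> \<in> paths_into n"
  moreover obtain w es where \<mu>: "\<mu> = (w, es)"
    by fastforce
  ultimately have p: "is_fpath s r (w, es)" "frng r (w, es) = v n"
    by (auto simp: paths_into_def)
  then have "w \<in> S"
    using reaches_in_S v_in_S unfolding reaches_def by blast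
  then obtain u \<rho> where u: "u \<in> sources_sub s r S" "is_fpath s r (u, \<rho>)" "frng r (u, \<rho>) = w"
    using source_path_exists by blast
  have "(u, \<rho> @ es) \<in> source_paths_into n"
    using u p by (auto simp: source_paths_into_def is_fpath_append frng_append fsrc_def)
  moreover have "fsuffix r (u, \<rho> @ es) (length \<rho>) = \<mu>"
    using u by (simp add: fsuffix_def \<mu>)
  ultimately show "\<mu> \<in> (\<lambda>(\<nu>, k). fsuffix r \<nu> k) ` Sigma (source_paths_into n) (\<lambda>\<nu>. {..flen \<nu>})"
    by (intro image_eqI[of _ _ "((u, \<rho> @ es), length \<rho>)"]) (auto simp: flen_def)
qed

text \<open>A path from a source of length \<open>L\<close> has \<open>L + 1\<close> suffixes, of lengths \<open>L, L - 1, \<dots>, 0\<close>; for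
  \<open>\<beta> < 0\<close> their weights form a geometric series dominated by the weight of the path itself.\<close>
lemma infsum_paths_into_le:
  assumes "\<beta> < 0"
  shows "infsum (path_weight \<beta> n) (paths_into n)
    \<le> ennreal (1 / (1 - exp \<beta>)) * infsum (path_weight \<beta> n) (source_paths_into n)"
proof -
  have "infsum (path_weight \<beta> n) (paths_into n)
      \<le> infsum (path_weight \<beta> n \<circ> (\<lambda>(\<nu>, k). fsuffix r \<nu> k)) (Sigma (source_paths_into n) (\<lambda>\<nu>. {..flen \<nu>}))"
    using paths_into_suffixes by (rule infsum_image_le_ennreal)
  also have "\<dots> \<le> ennreal (1 / (1 - exp \<beta>)) * infsum (path_weight \<beta> n) (source_paths_into n)"
  proof (rule infsum_Sigma_le_ennreal)
    fix \<nu>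
    have "(\<Sum>k\<le>flen \<nu>. path_weight \<beta> n (fsuffix r \<nu> k))
        = ennreal (\<Sum>k\<le>flen \<nu>. exp (\<beta> * (real n - real (flen \<nu> - k))))"
      by (simp add: path_weight_def fsuffix_def flen_def)
    also have "\<dots> \<le> ennreal (exp (\<beta> * (real n - real (flen \<nu>))) / (1 - exp \<beta>))"
      using assms by (intro ennreal_leI sum_exp_suffix_lengths_le)
    also have "\<dots> = ennreal (1 / (1 - exp \<beta>)) * path_weight \<beta> n \<nu>"
      using assms by (simp add: path_weight_def ennreal_mult'' [symmetric])
    finally show "(\<Sum>k\<in>{..flen \<nu>}. (path_weight \<beta> n \<circ> (\<lambda>(\<nu>, k). fsuffix r \<nu> k)) (\<nu>, k))
        \<le> ennreal (1 / (1 - exp \<beta>)) * path_weight \<beta> n \<nu>"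
      by simp
  qed simp
  finally show ?thesis .
qed

lemma infsum_source_paths_into_le: "infsum (path_weight \<beta> n) (source_paths_into n) \<le> infsum (path_weight \<beta> n) (paths_into n)"
  by (rule infsum_mono_set_ennreal) (auto simp: source_paths_into_def paths_into_def)

lemma incseq_infsum_source_paths_into: "incseq (\<lambda>n. infsum (path_weight \<beta> n) (source_paths_into n))"
proof (rule incseq_SucI)
  fix n
  define extend where "extend \<mu> = (fst \<mu>, snd \<mu> @ [x n])" for \<mu> :: "'v \<times> 'e list"
  have "inj extend"
    by (auto simp: extend_def inj_def prod_eq_iff)
  have "extend ` source_paths_into n \<subseteq> source_paths_into (Suc n)"
    using ipath by (auto simp: extend_def source_paths_into_def is_fpath_append frng_append is_fpath_Cons
        fsrc_def is_ipath_def v_def)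
  have "infsum (path_weight \<beta> n) (source_paths_into n)
      = infsum (path_weight \<beta> (Suc n) \<circ> extend) (source_paths_into n)"
    by (intro infsum_cong) (simp add: extend_def path_weight_def flen_def)
  also have "\<dots> = infsum (path_weight \<beta> (Suc n)) (extend ` source_paths_into n)"
    using \<open>inj extend\<close> by (simp add: infsum_reindex inj_on_subset)
  also have "\<dots> \<le> infsum (path_weight \<beta> (Suc n)) (source_paths_into (Suc n))"
    using \<open>extend ` source_paths_into n \<subseteq> _\<close> by (rule infsum_mono_set_ennreal)
  finally show "infsum (path_weight \<beta> n) (source_paths_into n)
      \<le> infsum (path_weight \<beta> (Suc n)) (source_paths_into (Suc n))" .
qed

definition tail_orbit :: "nat \<Rightarrow> (nat \<Rightarrow> 'e) set" where
  "tail_orbit n = {y. is_ipath s r y \<and> (\<exists>m. \<forall>i. y (i + m) = x (i + n))}"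

lemma orbit_eq_UN_tail_orbit: "orbit s r x = (\<Union>n. tail_orbit n)"
  by (auto simp: orbit_def tail_orbit_def)

lemma incseq_tail_orbit: "incseq tail_orbit"
proof (rule incseq_SucI, rule subsetI)
  fix n y assume "y \<in> tail_orbit n"
  then obtain m where y: "is_ipath s r y" "\<forall>i. y (i + m) = x (i + n)"
    by (auto simp: tail_orbit_def)
  have "\<forall>i. y (i + Suc m) = x (i + Suc n)"
  proof
    fix i show "y (i + Suc m) = x (i + Suc n)"
      using y(2)[rule_format, of "Suc i"] by simp
  qed
  then show "y \<in> tail_orbit (Suc n)"
    unfolding tail_orbit_def using y(1) by blast
qed

definition path_then_tail :: "nat \<Rightarrow> 'v \<times> 'e list \<Rightarrow> nat \<Rightarrow> 'e" where
  "path_then_tail n \<mu> i = (if i < flen \<mu> then snd \<mu> ! i else x (i - flen \<mu> + n))"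

lemma path_then_tail_shift: "path_then_tail n \<mu> (i + flen \<mu>) = x (i + n)"
  by (simp add: path_then_tail_def)

lemma path_then_tail_in_tail_orbit:
  assumes "\<mu> \<in> paths_into n"
  shows "path_then_tail n \<mu> \<in> tail_orbit n"
proof -
  obtain u es where \<mu>: "\<mu> = (u, es)"
    by fastforce
  have p: "is_fpath s r (u, es)" "frng r (u, es) = v n"
    using assms \<mu> by (auto simp: paths_into_def)
  have "r (path_then_tail n \<mu> i) = s (path_then_tail n \<mu> (Suc i))" for i
  proof (cases rule: linorder_cases[of "Suc i" "length es"])
    case less
    then show ?thesis
      using p(1) by (simp add: path_then_tail_def \<mu> flen_def is_fpath_def)
  next
    case equal
    then have "es \<noteq> []"
      by auto
    moreover have "last es = es ! i"
      using \<open>es \<noteq> []\<close> equal by (simp add: last_conv_nth flip: equal)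
    ultimately have "r (es ! i) = v n"
      using p(2) by (simp add: frng_def)
    then show ?thesis
      using equal by (simp add: path_then_tail_def \<mu> flen_def v_def)
  next
    case greater
    then have "Suc i - length es + n = Suc (i - length es + n)"
      by simp
    then show ?thesis
      using greater ipath by (simp add: path_then_tail_def \<mu> flen_def is_ipath_def)
  qed
  then show ?thesis
    unfolding tail_orbit_def is_ipath_def using path_then_tail_shift by blast
qed

lemma bij_betw_path_then_tail: "bij_betw (path_then_tail n) (paths_into n) (tail_orbit n)"
proof (rule bij_betw_imageI)
  show "inj_on (path_then_tail n) (paths_into n)"
  proof (rule inj_onI)
    fix \<mu> \<mu>' assume in_paths: "\<mu> \<in> paths_into n" "\<mu>' \<in> paths_into n"
      and eq: "path_then_tail n \<mu> = path_then_tail n \<mu>'"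
    obtain u es u' es' where \<mu>: "\<mu> = (u, es)" "\<mu>' = (u', es')"
      by fastforce
    have "\<forall>i. path_then_tail n \<mu> (i + flen \<mu>) = x (i + n)" "\<forall>i. path_then_tail n \<mu> (i + flen \<mu>') = x (i + n)"
      using path_then_tail_shift eq by metis+
    then have "flen \<mu> + n = flen \<mu>' + n"
      by (rule shift_offsets_eq[OF not_eventually_periodic])
    then have len: "length es = length es'"
      by (simp add: \<mu> flen_def)
    have "es ! i = es' ! i" if "i < length es" for i
      using fun_cong[OF eq, of i] that len by (simp add: path_then_tail_def \<mu> flen_def)
    then have "es = es'"
      using len by (simp add: nth_equalityI)
    moreover have "u = u'"
    proof (cases "es' = []")
      case True
      then show ?thesis
        using in_paths \<open>es = es'\<close> by (simp add: paths_into_def \<mu>)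
    next
      case False
      then show ?thesis
        using in_paths \<open>es = es'\<close> by (simp add: paths_into_def \<mu> is_fpath_def)
    qed
    ultimately show "\<mu> = \<mu>'"
      using \<mu> by simp
  qed
  show "path_then_tail n ` paths_into n = tail_orbit n"
  proof
    show "path_then_tail n ` paths_into n \<subseteq> tail_orbit n"
      using path_then_tail_in_tail_orbit by blast
  next
    show "tail_orbit n \<subseteq> path_then_tail n ` paths_into n"
    proof
      fix y assume "y \<in> tail_orbit n"
      then obtain m where y: "is_ipath s r y" "\<forall>i. y (i + m) = x (i + n)"
        by (auto simp: tail_orbit_def)
      define \<mu> where "\<mu> = (if m = 0 then v n else s (y 0), map y [0..<m])"
      have "frng r \<mu> = v n"
      proof (cases m)
        case (Suc m')
        then have "r (y m') = s (y (0 + m))"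
          using y(1) by (simp add: is_ipath_def)
        then show ?thesis
          using Suc y(2)[rule_format, of 0] by (simp add: \<mu>_def frng_def last_map v_def)
      qed (simp add: \<mu>_def)
      moreover have "is_fpath s r \<mu>"
        using y(1) by (auto simp: \<mu>_def is_fpath_def hd_map is_ipath_def)
      moreover have "path_then_tail n \<mu> i = y i" for i
      proof (cases "i < m")
        case False
        then have "y i = x (i - m + n)"
          using y(2)[rule_format, of "i - m"] by simp
        then show ?thesis
          using False by (simp add: path_then_tail_def \<mu>_def flen_def)
      qed (simp add: path_then_tail_def \<mu>_def flen_def)
      ultimately show "y \<in> path_then_tail n ` paths_into n"
        unfolding paths_into_def by (auto intro!: image_eqI[of _ _ \<mu>])
    qed
  qed
qed

lemma infsum_tail_orbit:
  "infsum (\<lambda>y. ennreal (lx x y powr \<beta>)) (tail_orbit n) = infsum (path_weight \<beta> n) (paths_into n)"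
proof -
  have "infsum (\<lambda>y. ennreal (lx x y powr \<beta>)) (tail_orbit n)
      = infsum (\<lambda>\<mu>. ennreal (lx x (path_then_tail n \<mu>) powr \<beta>)) (paths_into n)"
    using bij_betw_path_then_tail by (rule infsum_reindex_bij_betw[symmetric])
  also have "\<dots> = infsum (path_weight \<beta> n) (paths_into n)"
    using lx_powr_eq[OF not_eventually_periodic] path_then_tail_shift
    by (intro infsum_cong) (simp add: path_weight_def)
  finally show ?thesis .
qed

lemma beta_summable_iff:
  assumes "\<beta> < 0"
  shows "beta_summable s r \<beta> x \<longleftrightarrow>
    (\<exists>L. (\<lambda>n. infsum (path_weight \<beta> n) (source_paths_into n)) \<longlonglongrightarrow> L \<and> L < \<infinity>)"
proof -
  have "beta_summable s r \<beta> x \<longleftrightarrow> infsum (\<lambda>y. ennreal (lx x y powr \<beta>)) (orbit s r x) < \<infinity>"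
    using not_eventually_periodic by (simp add: beta_summable_def nonneg_summable_on_iff_infsum_ennreal)
  also have "infsum (\<lambda>y. ennreal (lx x y powr \<beta>)) (orbit s r x)
      = (SUP n. infsum (path_weight \<beta> n) (paths_into n))"
    by (simp add: orbit_eq_UN_tail_orbit infsum_UN_incseq_ennreal[OF incseq_tail_orbit] infsum_tail_orbit)
  also have "\<dots> < \<infinity> \<longleftrightarrow> (\<exists>L. (\<lambda>n. infsum (path_weight \<beta> n) (source_paths_into n)) \<longlonglongrightarrow> L \<and> L < \<infinity>)"
    using incseq_infsum_source_paths_into infsum_source_paths_into_le infsum_paths_into_le[OF assms]
    by (rule incseq_comparable_limit_finite_iff) simp
  finally show ?thesis .
qed

end

theorem theorem7p6:
  fixes s r :: "'e::countable \<Rightarrow> 'v::countable"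
    and xE :: "nat \<Rightarrow> 'e"
    and \<beta> :: real
  defines "S \<equiv> Vx s r xE"
  assumes ipath: "is_ipath s r xE"
    and src0: "is_source r (s (xE 0))"
    and fin_out: "\<forall>v\<in>S. finite {e \<in> sub_edges s r S. s e = v}"
    and acyc: "no_cycles_in s r S"
    and fin_diff: "finite (S - Wx s xE)"
    and beta_neg: "\<beta> < 0"
  shows "beta_summable s r \<beta> xE \<longleftrightarrow>
    (\<exists>L. ((\<lambda>n. \<Sum>\<^sub>\<infinity>\<mu>\<in>{\<mu>. is_fpath s r \<mu> \<and> fsrc \<mu> \<in> sources_sub s r S
                                 \<and> frng r \<mu> = s (xE n)}.
               ennreal (exp (\<beta> * (real n - real (flen \<mu>))))) \<longlonglongrightarrow> L)
         \<and> L < \<infinity>)"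
proof -
  interpret acyclic_ancestry s r xE
    using ipath acyc fin_diff unfolding S_def by unfold_locales
  show ?thesis
    using beta_summable_iff[OF beta_neg]
    unfolding S_def source_paths_into_def path_weight_def[abs_def] v_def .
qed

end
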